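(* Let $D:V\to\mathbb{N}$ be a pebble distribution on the infinite square grid (vertex set $\mathbb{Z}^2$, with $u,v$ adjacent iff they differ by $1$ in exactly one coordinate) such that $W_D(u)\ge 1$ for every vertex $u$. If a vertex $v$ satisfies $D(v)=k\ge 1$, then the excess weight at $v$ satisfies $\widehat W_D(v)\ge \frac{12}{25}k$.
   Context: For a distribution $D$, the weight function is $W_D(u)=\sum_{w}D(w)2^{-d(u,w)}$, where $d$ is graph distance (here the $\ell_1$ distance on $\mathbb{Z}^2$). The excess weight is $\widehat W_D(u)=W_D(u)-1$ if $W_D(u)>1$ and $\widehat W_D(u)=W_D(u)$ if $W_D(u)\le 1$. *)

theory Defs
  imports "HOL-Analysis.Analysis" "HOL-Library.Extended_Nonnegative_Real"
begin

text \<open>Vertices of the infinite square grid are pairs of integers; graph distance is the l1 distance.\<close>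
definition grid_dist :: "int \<times> int \<Rightarrow> int \<times> int \<Rightarrow> nat" where
  "grid_dist u w = nat (\<bar>fst u - fst w\<bar> + \<bar>snd u - snd w\<bar>)"

text \<open>Weight function, valued in extended nonnegative reals (so that infinite
  support and divergent sums are handled: the sum is then infinity).\<close>
definition weight :: "(int \<times> int \<Rightarrow> nat) \<Rightarrow> int \<times> int \<Rightarrow> ennreal" where
  "weight D u = (\<Sum>\<^sub>\<infinity> w. ennreal (real (D w) * (1/2) ^ grid_dist u w))"

definition excess_weight :: "(int \<times> int \<Rightarrow> nat) \<Rightarrow> int \<times> int \<Rightarrow> ennreal" where
  "excess_weight D u = (if weight D u > 1 then weight D u - 1 else weight D u)"

end

theory Submission imports Defs begin

text \<open>Each of the four diagonal neighbours \<open>v + (\<plusminus>1, \<plusminus>1)\<close> has weight at least 1. The kernel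
  \<open>2^-d\<close> factorises over the two coordinates, and in one coordinate
  \<open>2^-|a-1| + 2^-|a+1|\<close> equals \<open>5/2 \<cdot> 2^-|a|\<close> for \<open>a \<noteq> 0\<close> but only 1 for \<open>a = 0\<close>.
  Summing over the diagonal neighbours therefore gives \<open>4 + 21/4 \<cdot> D(v) \<le> 25/4 \<cdot> W(v)\<close>, the
  term \<open>21/4 \<cdot> D(v)\<close> being the slack of the pebbles on \<open>v\<close> itself. Hence
  \<open>W(v) \<ge> (16 + 21k)/25 > 1\<close> and \<open>W(v) - 1 \<ge> (21k - 9)/25 \<ge> 12k/25\<close>.\<close>

lemma half_power_grid_dist:
  "(1/2::real) ^ grid_dist u w = (1/2) ^ nat \<bar>fst u - fst w\<bar> * (1/2) ^ nat \<bar>snd u - snd w\<bar>"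
  unfolding grid_dist_def by (simp add: nat_add_distrib power_add)

lemma half_power_neighbours_sum:
  fixes a :: int
  shows "(\<Sum>s\<in>{-1, 1}. (1/2::real) ^ nat \<bar>a + s\<bar>) = (if a = 0 then 1 else 5/2 * (1/2) ^ nat \<bar>a\<bar>)"
proof (cases "a = 0")
  case False
  define n where "n = nat \<bar>a\<bar> - 1"
  have "nat \<bar>a\<bar> = n + 1"
    using False unfolding n_def by simp
  moreover have "(\<Sum>s\<in>{-1, 1}. (1/2::real) ^ nat \<bar>a + s\<bar>) = (1/2) ^ nat \<bar>a - 1\<bar> + (1/2) ^ nat \<bar>a + 1\<bar>"
    by simp
  moreover have "(1/2::real) ^ nat \<bar>a - 1\<bar> + (1/2) ^ nat \<bar>a + 1\<bar> = (1/2) ^ n + (1/2) ^ (n + 2)"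
  proof (cases "a > 0")
    case True
    then have "nat \<bar>a - 1\<bar> = n" "nat \<bar>a + 1\<bar> = n + 2" unfolding n_def by simp_all
    then show ?thesis by (simp only: add.commute)
  next
    case False
    with \<open>a \<noteq> 0\<close> have "nat \<bar>a - 1\<bar> = n + 2" "nat \<bar>a + 1\<bar> = n" unfolding n_def by simp_all
    then show ?thesis by (simp only: add.commute)
  qed
  ultimately show ?thesis
    using False by simp
qed simp

lemma diagonal_half_power_bound:
  "(\<Sum>s\<in>{-1, 1}. \<Sum>t\<in>{-1, 1}. (1/2::real) ^ grid_dist (fst u + s, snd u + t) w)
     + (if w = u then 21/4 else 0) \<le> 25/4 * (1/2) ^ grid_dist u w"
proof -
  define a where "a = fst u - fst w"
  define b where "b = snd u - snd w"
  define h where "h x = (\<Sum>s\<in>{-1, 1}. (1/2::real) ^ nat \<bar>x + s\<bar>)" for x :: int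
  have h_le: "h x \<le> 5/2 * (1/2) ^ nat \<bar>x\<bar>" for x
    unfolding h_def half_power_neighbours_sum by simp
  have "(\<Sum>s\<in>{-1, 1}. \<Sum>t\<in>{-1, 1}. (1/2::real) ^ grid_dist (fst u + s, snd u + t) w) = h a * h b"
    unfolding half_power_grid_dist h_def sum_product a_def b_def by (simp add: algebra_simps)
  moreover have "(1/2::real) ^ grid_dist u w = (1/2) ^ nat \<bar>a\<bar> * (1/2) ^ nat \<bar>b\<bar>"
    unfolding half_power_grid_dist a_def b_def ..
  moreover have "h a * h b \<le> 5/2 * (1/2) ^ nat \<bar>a\<bar> * (5/2 * (1/2) ^ nat \<bar>b\<bar>)"
    by (intro mult_mono h_le) (auto simp: h_def intro: sum_nonneg)
  moreover have "w = u \<longleftrightarrow> a = 0 \<and> b = 0"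
    unfolding a_def b_def by (auto simp: prod_eq_iff)
  ultimately show ?thesis
    by (auto simp: h_def half_power_neighbours_sum)
qed

text \<open>The library fact \<open>summable_on_ennreal\<close> is shadowed by a later fact of the same name.\<close>

lemma ennreal_summable_on [simp]: "(f :: 'a \<Rightarrow> ennreal) summable_on A"
  by (rule nonneg_summable_on_complete) simp

lemma infsum_sum_ennreal:
  fixes f :: "'i \<Rightarrow> 'a \<Rightarrow> ennreal"
  assumes "finite I"
  shows "(\<Sum>\<^sub>\<infinity>x\<in>A. \<Sum>i\<in>I. f i x) = (\<Sum>i\<in>I. \<Sum>\<^sub>\<infinity>x\<in>A. f i x)"
  using assms by (induction I rule: finite_induct) (simp_all add: infsum_add)

lemma infsum_cmult_right_ennreal:
  fixes f :: "'a \<Rightarrow> ennreal"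
  assumes "c < top"
  shows "(\<Sum>\<^sub>\<infinity>x\<in>A. c * f x) = c * (\<Sum>\<^sub>\<infinity>x\<in>A. f x)"
proof -
  have "infsum ((*) c \<circ> f) A = c * infsum f A"
  proof (rule infsum_comm_additive_general)
    show "isCont ((*) c) (infsum f A)"
      unfolding isCont_def using assms by (intro ennreal_tendsto_cmult tendsto_ident_at)
  qed (simp_all add: sum_distrib_left)
  then show ?thesis by (simp add: o_def)
qed

lemma weight_diagonal_bound:
  "(\<Sum>s\<in>{-1, 1}. \<Sum>t\<in>{-1, 1}. weight D (fst u + s, snd u + t)) + ennreal (21/4 * real (D u))
     \<le> ennreal (25/4) * weight D u"
proof -
  define contrib where "contrib x w = ennreal (real (D w) * (1/2) ^ grid_dist x w)" for x w
  define slack where "slack w = ennreal (if w = u then 21/4 * real (D u) else 0)" for w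
  have weight_eq: "weight D x = (\<Sum>\<^sub>\<infinity>w. contrib x w)" for x
    by (simp add: weight_def contrib_def)
  have slack_sum: "(\<Sum>\<^sub>\<infinity>w. slack w) = ennreal (21/4 * real (D u))"
  proof -
    have "(\<Sum>\<^sub>\<infinity>w. slack w) = (\<Sum>\<^sub>\<infinity>w\<in>{u}. slack w)"
      by (rule infsum_cong_neutral) (auto simp: slack_def)
    then show ?thesis by (simp add: slack_def)
  qed
  have pointwise: "(\<Sum>s\<in>{-1, 1}. \<Sum>t\<in>{-1, 1}. contrib (fst u + s, snd u + t) w) + slack w
      \<le> ennreal (25/4) * contrib u w" for w
  proof -
    have "(\<Sum>s\<in>{-1, 1}. \<Sum>t\<in>{-1, 1}. contrib (fst u + s, snd u + t) w) + slack w
        = ennreal (real (D w) * ((\<Sum>s\<in>{-1, 1}. \<Sum>t\<in>{-1, 1}. (1/2) ^ grid_dist (fst u + s, snd u + t) w)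
            + (if w = u then 21/4 else 0)))"
      by (auto simp: contrib_def slack_def sum_ennreal sum_distrib_left distrib_left sum_nonneg
          simp flip: ennreal_plus)
    also have "\<dots> \<le> ennreal (real (D w) * (25/4 * (1/2) ^ grid_dist u w))"
      by (intro ennreal_leI mult_left_mono diagonal_half_power_bound) simp
    also have "\<dots> = ennreal (25/4) * contrib u w"
      by (simp add: contrib_def flip: ennreal_mult)
    finally show ?thesis .
  qed
  have "(\<Sum>s\<in>{-1, 1}. \<Sum>t\<in>{-1, 1}. weight D (fst u + s, snd u + t)) + ennreal (21/4 * real (D u))
      = (\<Sum>\<^sub>\<infinity>w. (\<Sum>s\<in>{-1, 1}. \<Sum>t\<in>{-1, 1}. contrib (fst u + s, snd u + t) w) + slack w)"
    by (simp only: weight_eq infsum_add ennreal_summable_on infsum_sum_ennreal finite.intros slack_sum)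
  also have "\<dots> \<le> (\<Sum>\<^sub>\<infinity>w. ennreal (25/4) * contrib u w)"
    by (intro infsum_mono pointwise) simp_all
  also have "\<dots> = ennreal (25/4) * weight D u"
    by (simp add: weight_eq infsum_cmult_right_ennreal)
  finally show ?thesis .
qed

lemma weight_lower_bound:
  assumes "\<And>u. weight D u \<ge> 1"
  shows "ennreal ((16 + 21 * real (D v)) / 25) \<le> weight D v"
proof -
  have "ennreal (4 + 21/4 * real (D v))
      = (\<Sum>s\<in>{-1, 1::int}. \<Sum>t\<in>{-1, 1::int}. 1) + ennreal (21/4 * real (D v))"
    by (subst ennreal_plus) simp_all
  also have "\<dots> \<le> (\<Sum>s\<in>{-1, 1}. \<Sum>t\<in>{-1, 1}. weight D (fst v + s, snd v + t)) + ennreal (21/4 * real (D v))"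
    by (intro add_mono sum_mono assms order.refl)
  also have "\<dots> \<le> ennreal (25/4) * weight D v"
    by (rule weight_diagonal_bound)
  finally have "ennreal (4/25) * ennreal (4 + 21/4 * real (D v)) \<le> ennreal (4/25) * (ennreal (25/4) * weight D v)"
    by (rule mult_left_mono) simp
  moreover have "ennreal (4/25) * ennreal (4 + 21/4 * real (D v)) = ennreal ((16 + 21 * real (D v)) / 25)"
    by (subst ennreal_mult[symmetric]) (simp_all add: field_simps)
  moreover have "ennreal (4/25) * (ennreal (25/4) * weight D v) = weight D v"
    by (simp flip: ennreal_mult add: mult.assoc[symmetric])
  ultimately show ?thesis
    by simp
qed

lemma excess_weight_ge:
  assumes "ennreal c \<le> weight D v" and "1 < c"
  shows "ennreal (c - 1) \<le> excess_weight D v"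
proof -
  have "1 < weight D v"
    using assms by (metis one_less_ennreal order_less_le_trans)
  moreover have "ennreal (c - 1) = ennreal c - 1"
    by (simp add: ennreal_minus[symmetric] del: ennreal_minus)
  then have "ennreal (c - 1) \<le> weight D v - 1"
    using assms(1) by (simp add: ennreal_minus_mono)
  ultimately show ?thesis
    by (simp add: excess_weight_def)
qed

theorem mainTheorem5:
  fixes D :: "int \<times> int \<Rightarrow> nat" and v :: "int \<times> int" and k :: nat
  assumes "\<And>u. weight D u \<ge> 1"
    and "D v = k" and "k \<ge> 1"
  shows "excess_weight D v \<ge> ennreal (12 / 25 * real k)"
proof -
  have "ennreal (12 / 25 * real k) \<le> ennreal ((16 + 21 * real k) / 25 - 1)"
    using assms(3) by (intro ennreal_leI) (simp add: field_simps)
  also have "\<dots> \<le> excess_weight D v"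
    using weight_lower_bound[OF assms(1), of v] assms(2,3) by (intro excess_weight_ge) auto
  finally show ?thesis .
qed

end
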